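(* Consider the algorithm in the context with step sizes $\eta_t\le\frac{1}{3LB_t^{2/3}}$. Then for every epoch $t$: (i) $\mathbb{E}\|\tilde{x}_t-\tilde{x}_{t-1}\|^2<\infty$; (ii) $\mathbb{E}(f(\tilde{x}_t)-f(\tilde{x}^\ast))<\infty$; (iii) $\mathbb{E}\|\nabla f(\tilde{x}_t)\|^2<\infty$; (iv) $\mathbb{E}|\langle e_t,\tilde{x}_t-\tilde{x}_{t-1}\rangle|<\infty$; (v) $\mathbb{E}|\langle e_t,\nabla f(\tilde{x}_t)\rangle|<\infty$, where $e_t=\mu_t-\nabla f(\tilde{x}_{t-1})$.
   Context: Setting: $f(x)=\mathbb{E}_{\xi\sim\mathcal{D}}f(x;\xi)$ where $f$ and all $f(\cdot;\xi)$ are $L$-smooth and $\|\nabla f(x;\xi)-\nabla f(x)\|\le\mathcal{V}$ for all $x,\xi$; $\tilde{x}^\ast$ is a global minimizer of $f$; $\tilde{x}_0\in\mathbb{R}^d$ is the given initial point. $K$ worker nodes, honest set $\mathcal{G}$ with $|\mathcal{G}|\ge(1-\alpha)K$, $\alpha\in[0,1/2)$, others Byzantine. Epoch $t$ (batch size $B_t$, $\delta\in(0,1)$, $C=2\log(2K/\delta)$, $\mathfrak{T}_\mu=2\mathcal{V}\sqrt{C/B_t}$): $x_0^t=\tilde{x}_{t-1}$; honest $k$ sends $\mu_t^{(k)}=\frac{1}{B_t}\sum_{i=1}^{B_t}\nabla f(x_0^t;\xi_{t,i}^{(k)})$ (fresh i.i.d. samples), Byzantine nodes send arbitrary vectors;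 $\mu_t^{\mathrm{med}}=\mu_t^{(k)}$ for any $k$ with more than $K/2$ indices $k'$ satisfying $\|\mu_t^{(k')}-\mu_t^{(k)}\|\le\mathfrak{T}_\mu$, $\mathcal{G}_t=\{k:\|\mu_t^{(k)}-\mu_t^{\mathrm{med}}\|\le2\mathfrak{T}_\mu\}$; if $|\mathcal{G}_t|<(1-\alpha)K$, instead use radius $2\mathcal{V}$ for the median and $\mathcal{G}_t=\{k:\|\mu_t^{(k)}-\mu_t^{\mathrm{med}}\|\le4\mathcal{V}\}$; $\mu_t=\frac{1}{|\mathcal{G}_t|}\sum_{k\in\mathcal{G}_t}\mu_t^{(k)}$; $N_t\sim\mathrm{Geom}(\frac{B_t}{B_t+1})$, $\mathbb{P}[N_t=n]=\frac{1}{B_t+1}(\frac{B_t}{B_t+1})^n$, $n\ge0$, independent of the samples; for $n=1,\dots,N_t$: $v_{n-1}^t=\nabla f(x_{n-1}^t;\xi_{n-1}^t)-\nabla f(x_0^t;\xi_{n-1}^t)+\mu_t$ with fresh $\xi_{n-1}^t\sim\mathcal{D}$, $x_n^t=x_{n-1}^t-\eta_tv_{n-1}^t$; $\tilde{x}_t=x_{N_t}^t$. *)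

theory Defs
  imports "HOL-Analysis.Analysis" "HOL-Probability.Probability"
begin

text \<open>vs k is the vector sent by worker k (only k < K matters).\<close>

definition close_count :: "(nat \<Rightarrow> 'a::real_normed_vector) \<Rightarrow> nat \<Rightarrow> real \<Rightarrow> nat \<Rightarrow> nat" where
  "close_count vs K r k = card {k'. k' < K \<and> norm (vs k' - vs k) \<le> r}"

definition is_med :: "(nat \<Rightarrow> 'a::real_normed_vector) \<Rightarrow> nat \<Rightarrow> real \<Rightarrow> nat \<Rightarrow> bool" where
  "is_med vs K r k \<longleftrightarrow> k < K \<and> 2 * close_count vs K r k > K"

definition filt :: "(nat \<Rightarrow> 'a::real_normed_vector) \<Rightarrow> nat \<Rightarrow> real \<Rightarrow> nat \<Rightarrow> nat set" where
  "filt vs K r m = {k. k < K \<and> norm (vs k - vs m) \<le> r}"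

definition avg :: "(nat \<Rightarrow> 'a::real_normed_vector) \<Rightarrow> nat set \<Rightarrow> 'a" where
  "avg vs S = (1 / real (card S)) *\<^sub>R (\<Sum>k\<in>S. vs k)"

text \<open>mu is a possible output of the aggregation step with threshold T (= \<T>_\<mu>),
  bound V (= \<V>), Byzantine fraction alpha and K workers.  The median index may be
  "any" admissible index; if for the chosen index the filtered set is too small (or no
  admissible index for radius T exists) the fallback with radius 2V / 4V is used.\<close>
definition agg_output :: "(nat \<Rightarrow> 'a::real_normed_vector) \<Rightarrow> nat \<Rightarrow> real \<Rightarrow> real \<Rightarrow> real \<Rightarrow> 'a \<Rightarrow> bool" where
  "agg_output vs K alpha T V mu \<longleftrightarrow>
     (\<exists>m. is_med vs K T m \<and> real (card (filt vs K (2 * T) m)) \<ge> (1 - alpha) * real K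
          \<and> mu = avg vs (filt vs K (2 * T) m))
   \<or> (((\<exists>m. is_med vs K T m \<and> real (card (filt vs K (2 * T) m)) < (1 - alpha) * real K)
         \<or> \<not> (\<exists>m. is_med vs K T m))
      \<and> (\<exists>m'. is_med vs K (2 * V) m' \<and> mu = avg vs (filt vs K (4 * V) m')))"

datatype rv_index =
    Samp nat nat nat  \<comment> \<open>Samp t k i: sample \<xi>_{t,i}^{(k)} of honest worker k in epoch t\<close>
  | Inner nat nat     \<comment> \<open>Inner t n: sample \<xi>_n^t of the inner loop of epoch t\<close>
  | Geo nat           \<comment> \<open>Geo t: the geometric loop length N_t\<close>

definition gen_events :: "'w measure \<Rightarrow> ('w \<Rightarrow> 'b) \<Rightarrow> 'b measure \<Rightarrow> 'w set set" where
  "gen_events M X S = {X -` A \<inter> space M | A. A \<in> sets S}"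

end

(*
  All five quantities are dominated, pathwise, by polynomials in the loop lengths N_1, ..., N_t.
  Since the honest workers form a majority, the filtered average mu_t lies within 3 T_mu + 7 V of
  the true gradient at x~_{t-1}; hence every inner step is a gradient step of f perturbed by a vector
  of norm at most W_t = 2 V + 3 T_mu + 7 V. For L-smooth f and eta_t L <= 1/3 such a step raises f by
  at most eta_t W_t^2, so f(x~_t) - f(xstar) <= f(x_0) - f(xstar) + sum_r eta_r W_r^2 N_r, and through
  |grad f|^2 <= 2 L (f - f(xstar)) the same bound controls the gradients and thus the displacement of
  the inner loop. Geometric loop lengths have moments of every order, and the mixed terms N_t^2 N_r
  are bounded by N_t^3 + N_r^3.
*)

theory Submission
  imports Defs
begin

section \<open>Integrability by domination\<close>

lemma summable_power_times_geometric:
  fixes q :: real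
  assumes "0 \<le> q" "q < 1"
  shows "summable (\<lambda>n. real n ^ k * q ^ n)"
proof -
  have "conv_radius (\<lambda>n. real n ^ k) = 1"
  proof (rule conv_radius_ratio_limit)
    show "eventually (\<lambda>n. real n ^ k \<noteq> 0) sequentially"
      using eventually_gt_at_top[of "0::nat"] by eventually_elim simp
    have "(\<lambda>n. (real n / real (Suc n)) ^ k) \<longlonglongrightarrow> 1 ^ k"
      by (intro tendsto_power LIMSEQ_n_over_Suc_n)
    then show "(\<lambda>n. norm (real n ^ k) / norm (real (Suc n) ^ k)) \<longlonglongrightarrow> 1"
      by (simp add: power_divide del: of_nat_Suc)
  qed simp
  then show ?thesis
    using assms by (intro summable_in_conv_radius) auto
qed

lemma integrable_nat_valued_comp:
  fixes h :: "nat \<Rightarrow> real"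
  assumes "finite_measure M" and N: "N \<in> measurable M (count_space UNIV)"
    and summable: "summable (\<lambda>n. \<bar>h n\<bar> * measure M {\<omega> \<in> space M. N \<omega> = n})"
  shows "integrable M (\<lambda>\<omega>. h (N \<omega>))"
proof (rule integrableI_bounded)
  interpret finite_measure M by fact
  define A where "A n = {\<omega> \<in> space M. N \<omega> = n}" for n
  have A_sets: "A n \<in> sets M" for n
    unfolding A_def using N by measurable
  show "(\<lambda>\<omega>. h (N \<omega>)) \<in> borel_measurable M"
    using N by measurable
  have "(\<integral>\<^sup>+\<omega>. ennreal (norm (h (N \<omega>))) \<partial>M) = (\<integral>\<^sup>+\<omega>. (\<Sum>n. ennreal \<bar>h n\<bar> * indicator (A n) \<omega>) \<partial>M)"
  proof (rule nn_integral_cong)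
    fix \<omega> assume "\<omega> \<in> space M"
    then have "(\<lambda>n. ennreal \<bar>h n\<bar> * indicator (A n) \<omega>) = (\<lambda>n. if n = N \<omega> then ennreal \<bar>h (N \<omega>)\<bar> else 0)"
      by (auto simp: A_def indicator_def)
    then show "ennreal (norm (h (N \<omega>))) = (\<Sum>n. ennreal \<bar>h n\<bar> * indicator (A n) \<omega>)"
      using sums_single[of "N \<omega>" "\<lambda>_. ennreal \<bar>h (N \<omega>)\<bar>"] by (simp add: sums_iff)
  qed
  also have "\<dots> = (\<Sum>n. ennreal \<bar>h n\<bar> * emeasure M (A n))"
    using A_sets by (simp add: nn_integral_suminf nn_integral_cmult_indicator)
  also have "\<dots> = ennreal (\<Sum>n. \<bar>h n\<bar> * measure M (A n))"
    using summable unfolding A_def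
    by (subst suminf_ennreal2[symmetric]) (auto simp: emeasure_eq_measure ennreal_mult)
  finally show "(\<integral>\<^sup>+\<omega>. ennreal (norm (h (N \<omega>))) \<partial>M) < \<infinity>"
    by simp
qed

lemma integrable_power_geometric:
  assumes "prob_space M" "N \<in> measurable M (count_space UNIV)"
    and "\<And>n. measure M {\<omega> \<in> space M. N \<omega> = n} = p * q ^ n" "0 \<le> q" "q < 1"
  shows "integrable M (\<lambda>\<omega>. real (N \<omega>) ^ k)"
proof (rule integrable_nat_valued_comp)
  show "finite_measure M"
    using assms(1) by (simp add: prob_space_def)
  show "summable (\<lambda>n. \<bar>real n ^ k\<bar> * measure M {\<omega> \<in> space M. N \<omega> = n})"
    using summable_mult[OF summable_power_times_geometric[OF assms(4,5)], of p]
    by (simp add: assms(3) mult_ac)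
qed fact

lemma sq_mult_le_cube_add_cube:
  fixes a b :: real
  assumes "0 \<le> a" "0 \<le> b"
  shows "a\<^sup>2 * b \<le> a ^ 3 + b ^ 3"
proof (cases "a \<le> b")
  case True
  then have "a\<^sup>2 * b \<le> b\<^sup>2 * b"
    using assms by (intro mult_right_mono power_mono) auto
  moreover have "0 \<le> a ^ 3"
    using assms by simp
  ultimately show ?thesis
    by (simp add: power3_eq_cube power2_eq_square)
next
  case False
  then have "a\<^sup>2 * b \<le> a\<^sup>2 * a"
    using assms by (intro mult_left_mono) auto
  moreover have "0 \<le> b ^ 3"
    using assms by simp
  ultimately show ?thesis
    by (simp add: power3_eq_cube power2_eq_square)
qed

lemma integrable_abs_le:
  fixes u v :: "'w \<Rightarrow> real"
  assumes "integrable M v" "u \<in> borel_measurable M" "\<And>\<omega>. \<omega> \<in> space M \<Longrightarrow> \<bar>u \<omega>\<bar> \<le> v \<omega>"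
  shows "integrable M u"
proof (rule Bochner_Integration.integrable_bound[OF assms(1,2)])
  show "AE \<omega> in M. norm (u \<omega>) \<le> norm (v \<omega>)"
    using assms(3) by (intro AE_I2) force
qed

lemma abs_inner_le_one_plus_sq:
  fixes e v :: "'a::real_inner"
  assumes "norm e \<le> E"
  shows "\<bar>e \<bullet> v\<bar> \<le> E * (1 + (norm v)\<^sup>2)"
proof -
  have "2 * norm v \<le> 1 + (norm v)\<^sup>2"
    using zero_le_power2[of "norm v - 1"] by (simp add: power2_eq_square algebra_simps)
  then have "norm v \<le> 1 + (norm v)\<^sup>2"
    using norm_ge_zero[of v] by linarith
  then have "norm e * norm v \<le> E * (1 + (norm v)\<^sup>2)"
    using assms order_trans[OF norm_ge_zero assms] by (intro mult_mono) auto
  then show ?thesis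
    using Cauchy_Schwarz_ineq2[of e v] by linarith
qed

section \<open>Gradient descent with bounded perturbations\<close>

lemma lipschitz_gradient_upper_bound:
  fixes f :: "'a::real_inner \<Rightarrow> real" and gf :: "'a \<Rightarrow> 'a"
  assumes f_deriv: "\<And>y. (f has_derivative (\<lambda>h. gf y \<bullet> h)) (at y)"
    and gf_lip: "\<And>y z. norm (gf y - gf z) \<le> L * norm (y - z)"
  shows "f y \<le> f x + gf x \<bullet> (y - x) + L / 2 * (norm (y - x))\<^sup>2"
proof -
  define h where "h = y - x"
  define \<phi> where "\<phi> s = f (x + s *\<^sub>R h) - s * (gf x \<bullet> h) - L / 2 * s\<^sup>2 * (norm h)\<^sup>2" for s :: real
  have \<phi>_deriv: "(\<phi> has_real_derivative (gf (x + s *\<^sub>R h) - gf x) \<bullet> h - L * s * (norm h)\<^sup>2) (at s)" for s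
  proof -
    have "((\<lambda>s. f (x + s *\<^sub>R h)) has_derivative (\<lambda>d. gf (x + s *\<^sub>R h) \<bullet> (d *\<^sub>R h))) (at s)"
      by (rule has_derivative_compose[OF _ f_deriv]) (auto intro!: derivative_eq_intros)
    then have f_line: "((\<lambda>s. f (x + s *\<^sub>R h)) has_real_derivative gf (x + s *\<^sub>R h) \<bullet> h) (at s)"
      unfolding has_field_derivative_def
      by (rule has_derivative_eq_rhs) (auto simp: fun_eq_iff mult.commute)
    show ?thesis
      unfolding \<phi>_def
      by (rule derivative_eq_intros f_line refl)+ (simp add: power2_eq_square algebra_simps inner_diff_left)
  qed
  have \<phi>_deriv_nonpos: "(gf (x + s *\<^sub>R h) - gf x) \<bullet> h - L * s * (norm h)\<^sup>2 \<le> 0" if "0 \<le> s" for s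
  proof -
    have "(gf (x + s *\<^sub>R h) - gf x) \<bullet> h \<le> norm (gf (x + s *\<^sub>R h) - gf x) * norm h"
      by (rule norm_cauchy_schwarz)
    also have "\<dots> \<le> L * norm (s *\<^sub>R h) * norm h"
      using gf_lip[of "x + s *\<^sub>R h" x] by (intro mult_right_mono) auto
    also have "\<dots> = L * s * (norm h)\<^sup>2"
      using that by (simp add: power2_eq_square)
    finally show ?thesis
      by simp
  qed
  have "\<phi> 1 \<le> \<phi> 0"
  proof (rule DERIV_nonpos_imp_nonincreasing[of 0 1])
    fix s :: real
    assume "0 \<le> s" "s \<le> 1"
    then show "\<exists>y. (\<phi> has_real_derivative y) (at s) \<and> y \<le> 0"
      using \<phi>_deriv \<phi>_deriv_nonpos by blast
  qed simp
  then show ?thesis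
    unfolding \<phi>_def h_def by simp
qed

lemma norm_gradient_sq_le_suboptimality:
  fixes f :: "'a::real_inner \<Rightarrow> real" and gf :: "'a \<Rightarrow> 'a"
  assumes upper: "\<And>x y. f y \<le> f x + gf x \<bullet> (y - x) + L / 2 * (norm (y - x))\<^sup>2"
    and min: "\<And>y. fmin \<le> f y" and "0 \<le> L"
  shows "(norm (gf x))\<^sup>2 \<le> 2 * L * (f x - fmin)"
proof -
  have step: "fmin \<le> f x - s * (norm (gf x))\<^sup>2 + L / 2 * s\<^sup>2 * (norm (gf x))\<^sup>2" for s
    using min[of "x - s *\<^sub>R gf x"] upper[where x = x and y = "x - s *\<^sub>R gf x"]
    by (simp add: power_mult_distrib power2_norm_eq_inner)
  show ?thesis
  proof (cases "L = 0")
    case True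
    have "gf x = 0"
    proof (rule ccontr)
      assume "gf x \<noteq> 0"
      then show False
        using step[of "(f x - fmin + 1) / (norm (gf x))\<^sup>2"] True by simp
    qed
    then show ?thesis
      using min[of x] True by simp
  next
    case False
    with \<open>0 \<le> L\<close> have "0 < L" by simp
    with step[of "1 / L"] show ?thesis
      by (simp add: power2_eq_square field_simps)
  qed
qed

lemma perturbed_gradient_step_value:
  fixes f :: "'a::real_inner \<Rightarrow> real" and gf :: "'a \<Rightarrow> 'a"
  assumes upper: "\<And>x y. f y \<le> f x + gf x \<bullet> (y - x) + L / 2 * (norm (y - x))\<^sup>2"
    and "0 < eta" "L * eta \<le> 1 / 3"
  shows "f (x - eta *\<^sub>R (gf x + w)) \<le> f x + eta * (norm w)\<^sup>2"
proof -
  define d where "d = gf x + w"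
  have "L / 2 * (norm (eta *\<^sub>R d))\<^sup>2 = (L * eta) * (eta * (norm d)\<^sup>2) / 2"
    by (simp add: power_mult_distrib power2_eq_square)
  also have "\<dots> \<le> (1 / 3) * (eta * (norm d)\<^sup>2) / 2"
    using assms(2,3) by (intro divide_right_mono mult_right_mono) auto
  finally have curvature: "L / 2 * (norm (eta *\<^sub>R d))\<^sup>2 \<le> eta * (norm d)\<^sup>2 / 6"
    by simp
  have "2 * (w \<bullet> d) \<le> (norm w)\<^sup>2 + (norm d)\<^sup>2"
    using zero_le_power2[of "norm (w - d)"]
    by (simp add: power2_norm_eq_inner inner_diff_left inner_diff_right inner_commute)
  then have cross: "eta * (w \<bullet> d) \<le> (eta * (norm w)\<^sup>2 + eta * (norm d)\<^sup>2) / 2"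
    using mult_left_mono[of _ _ eta] assms(2) by (fastforce simp: field_simps)
  have "gf x \<bullet> (eta *\<^sub>R d) = eta * (norm d)\<^sup>2 - eta * (w \<bullet> d)"
    by (simp add: d_def power2_norm_eq_inner inner_add_left inner_add_right algebra_simps)
  then have "f (x - eta *\<^sub>R d) \<le> f x - (eta * (norm d)\<^sup>2 - eta * (w \<bullet> d)) + eta * (norm d)\<^sup>2 / 6"
    using upper[where x = x and y = "x - eta *\<^sub>R d"] curvature by simp
  also have "\<dots> \<le> f x + eta * (norm w)\<^sup>2"
  proof -
    have "0 \<le> eta * (norm d)\<^sup>2" "0 \<le> eta * (norm w)\<^sup>2"
      using assms(2) by simp_all
    with cross show ?thesis
      by (simp add: field_simps)
  qed
  finally show ?thesis
    by (simp add: d_def)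
qed

lemma perturbed_gradient_descent_value:
  fixes f :: "'a::real_inner \<Rightarrow> real" and gf :: "'a \<Rightarrow> 'a"
  assumes upper: "\<And>x y. f y \<le> f x + gf x \<bullet> (y - x) + L / 2 * (norm (y - x))\<^sup>2"
    and eta: "0 < eta" "L * eta \<le> 1 / 3"
    and step: "\<And>n. xs (Suc n) = xs n - eta *\<^sub>R (gf (xs n) + w n)"
    and w_le: "\<And>n. norm (w n) \<le> W"
  shows "f (xs n) \<le> f (xs 0) + real n * eta * W\<^sup>2"
proof (induction n)
  case (Suc n)
  have "f (xs (Suc n)) \<le> f (xs n) + eta * (norm (w n))\<^sup>2"
    unfolding step by (rule perturbed_gradient_step_value[OF upper eta])
  also have "\<dots> \<le> f (xs n) + eta * W\<^sup>2"
    using w_le[of n] eta by (intro add_left_mono mult_left_mono power_mono) auto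
  finally show ?case
    using Suc by (simp add: algebra_simps)
qed simp

lemma perturbed_gradient_descent_displacement:
  fixes gf :: "'a::real_normed_vector \<Rightarrow> 'a"
  assumes "0 \<le> eta"
    and step: "\<And>n. xs (Suc n) = xs n - eta *\<^sub>R (gf (xs n) + w n)"
    and gf_le: "\<And>k. k < n \<Longrightarrow> norm (gf (xs k)) \<le> R"
    and w_le: "\<And>k. norm (w k) \<le> W"
  shows "norm (xs n - xs 0) \<le> real n * eta * (R + W)"
  using gf_le
proof (induction n)
  case (Suc n)
  have "norm (gf (xs n) + w n) \<le> R + W"
    using norm_triangle_le[OF add_mono[OF Suc.prems[of n] w_le[of n]]] by simp
  then have "norm (eta *\<^sub>R (gf (xs n) + w n)) \<le> eta * (R + W)"
    using \<open>0 \<le> eta\<close> by (simp add: mult_left_mono)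
  moreover have "xs (Suc n) - xs 0 = (xs n - xs 0) - eta *\<^sub>R (gf (xs n) + w n)"
    by (simp add: step)
  then have "norm (xs (Suc n) - xs 0) \<le> norm (xs n - xs 0) + norm (eta *\<^sub>R (gf (xs n) + w n))"
    by (metis norm_triangle_ineq4)
  ultimately show ?case
    using Suc by (simp add: algebra_simps)
qed simp

lemma perturbed_gradient_descent_displacement_sq:
  fixes f :: "'a::real_inner \<Rightarrow> real" and gf :: "'a \<Rightarrow> 'a"
  assumes upper: "\<And>x y. f y \<le> f x + gf x \<bullet> (y - x) + L / 2 * (norm (y - x))\<^sup>2"
    and min: "\<And>y. fmin \<le> f y" and "0 \<le> L"
    and eta: "0 < eta" "L * eta \<le> 1 / 3"
    and step: "\<And>n. xs (Suc n) = xs n - eta *\<^sub>R (gf (xs n) + w n)"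
    and w_le: "\<And>n. norm (w n) \<le> W"
  shows "(norm (xs n - xs 0))\<^sup>2
           \<le> 2 * (real n)\<^sup>2 * eta\<^sup>2 * (2 * L * (f (xs 0) - fmin + real n * eta * W\<^sup>2) + W\<^sup>2)"
proof -
  have f_iterate_le: "f (xs k) \<le> f (xs 0) + real k * eta * W\<^sup>2" for k
    using upper eta step w_le by (rule perturbed_gradient_descent_value)
  define R where "R = sqrt (2 * L * (f (xs 0) - fmin + real n * eta * W\<^sup>2))"
  have "0 \<le> 2 * L * (f (xs 0) - fmin + real n * eta * W\<^sup>2)"
    using min[of "xs 0"] \<open>0 \<le> L\<close> eta by simp
  then have R_sq: "R\<^sup>2 = 2 * L * (f (xs 0) - fmin + real n * eta * W\<^sup>2)" and "0 \<le> R"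
    unfolding R_def by simp_all
  have "norm (gf (xs k)) \<le> R" if "k < n" for k
  proof -
    have "(norm (gf (xs k)))\<^sup>2 \<le> 2 * L * (f (xs k) - fmin)"
      by (rule norm_gradient_sq_le_suboptimality[OF upper min \<open>0 \<le> L\<close>])
    also have "\<dots> \<le> 2 * L * (f (xs 0) - fmin + real k * eta * W\<^sup>2)"
      using f_iterate_le[of k] \<open>0 \<le> L\<close>
      by (intro mult_left_mono) auto
    also have "\<dots> \<le> R\<^sup>2"
      unfolding R_sq using that \<open>0 \<le> L\<close> eta by (intro mult_left_mono add_left_mono mult_right_mono) auto
    finally show ?thesis
      using \<open>0 \<le> R\<close> by (rule power2_le_imp_le)
  qed
  with eta(1) step w_le have "norm (xs n - xs 0) \<le> real n * eta * (R + W)"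
    by (intro perturbed_gradient_descent_displacement) auto
  then have "(norm (xs n - xs 0))\<^sup>2 \<le> (real n)\<^sup>2 * eta\<^sup>2 * (R + W)\<^sup>2"
    using power_mono[of _ _ 2] by (fastforce simp: power_mult_distrib)
  also have "\<dots> \<le> (real n)\<^sup>2 * eta\<^sup>2 * (2 * R\<^sup>2 + 2 * W\<^sup>2)"
    using sum_squares_bound[of R W] eta(1) by (intro mult_left_mono) (auto simp: power2_eq_square algebra_simps)
  finally show ?thesis
    unfolding R_sq by (simp add: algebra_simps)
qed

section \<open>Robust aggregation\<close>

lemma is_med_close_to_honest:
  assumes "is_med vs K r m" "G \<subseteq> {..<K}" "K < 2 * card G"
  obtains h where "h \<in> G" "norm (vs h - vs m) \<le> r"
proof -
  define S where "S = {k. k < K \<and> norm (vs k - vs m) \<le> r}"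
  have "finite S" "finite G"
    using assms(2) finite_subset by (auto simp: S_def)
  moreover have "S \<union> G \<subseteq> {..<K}"
    using assms(2) by (auto simp: S_def)
  ultimately have "card S + card G - card (S \<inter> G) \<le> K"
    using card_Un_Int[of S G] card_mono[of "{..<K}" "S \<union> G"] by simp
  moreover have "K < 2 * card S"
    using assms(1) by (simp add: is_med_def close_count_def S_def)
  ultimately have "S \<inter> G \<noteq> {}"
    using assms(3) by auto
  then show ?thesis
    using that by (auto simp: S_def)
qed

lemma norm_avg_diff_le:
  fixes vs :: "nat \<Rightarrow> 'a::real_normed_vector"
  assumes "finite S" "S \<noteq> {}" "\<And>k. k \<in> S \<Longrightarrow> norm (vs k - c) \<le> R"
  shows "norm (avg vs S - c) \<le> R"
proof -
  have card: "0 < card S"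
    using assms by (simp add: card_gt_0_iff)
  then have "avg vs S - c = (1 / real (card S)) *\<^sub>R (\<Sum>k\<in>S. vs k - c)"
    by (simp add: avg_def sum_subtractf scaleR_diff_right sum_constant_scaleR)
  then have "norm (avg vs S - c) \<le> (1 / real (card S)) * (\<Sum>k\<in>S. norm (vs k - c))"
    by (simp add: norm_sum divide_right_mono)
  also have "\<dots> \<le> (1 / real (card S)) * (\<Sum>k\<in>S. R)"
    by (intro mult_left_mono sum_mono assms(3)) auto
  also have "\<dots> = R"
    using card by simp
  finally show ?thesis .
qed

lemma filt_avg_close:
  fixes vs :: "nat \<Rightarrow> 'a::real_normed_vector"
  assumes "is_med vs K r m" "G \<subseteq> {..<K}" "K < 2 * card G"
    and honest: "\<And>k. k \<in> G \<Longrightarrow> norm (vs k - c) \<le> V" and "0 \<le> r'"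
  shows "norm (avg vs (filt vs K r' m) - c) \<le> r' + r + V"
proof (rule norm_avg_diff_le)
  obtain h where h: "h \<in> G" "norm (vs h - vs m) \<le> r"
    using is_med_close_to_honest[OF assms(1-3)] .
  show "finite (filt vs K r' m)"
    by (simp add: filt_def)
  show "filt vs K r' m \<noteq> {}"
    using assms(1,5) by (auto simp: filt_def is_med_def)
  fix k
  assume "k \<in> filt vs K r' m"
  then have "norm (vs k - vs m) \<le> r'"
    by (simp add: filt_def)
  moreover have "norm (vs k - c) \<le> norm (vs k - vs m) + norm (vs m - vs h) + norm (vs h - c)"
    using norm_triangle_ineq[of "vs k - vs m" "vs m - vs h"] norm_triangle_ineq[of "vs k - vs h" "vs h - c"]
    by (simp add: algebra_simps)
  ultimately show "norm (vs k - c) \<le> r' + r + V"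
    using h honest[of h] by (simp add: norm_minus_commute)
qed

lemma agg_output_close:
  fixes vs :: "nat \<Rightarrow> 'a::real_normed_vector"
  assumes "agg_output vs K alpha T V mu" "0 \<le> T" "0 \<le> V"
    and "G \<subseteq> {..<K}" "K < 2 * card G" "\<And>k. k \<in> G \<Longrightarrow> norm (vs k - c) \<le> V"
  shows "norm (mu - c) \<le> 3 * T + 7 * V"
proof -
  from assms(1) consider
      m where "is_med vs K T m" "mu = avg vs (filt vs K (2 * T) m)"
    | m where "is_med vs K (2 * V) m" "mu = avg vs (filt vs K (4 * V) m)"
    unfolding agg_output_def by blast
  then show ?thesis
  proof cases
    case 1
    with filt_avg_close[OF 1(1) assms(4-6), of "2 * T"] show ?thesis
      using assms(2,3) by simp
  next
    case 2
    with filt_avg_close[OF 2(1) assms(4-6), of "4 * V"] show ?thesis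
      using assms(2,3) by simp
  qed
qed

section \<open>The epochs of the algorithm\<close>

locale byzantine_svrg =
  fixes g :: "'a::euclidean_space \<Rightarrow> 'b \<Rightarrow> 'a" and f :: "'a \<Rightarrow> real" and gf :: "'a \<Rightarrow> 'a"
    and D :: "'b measure" and L V :: real and xstar x0 :: 'a
    and K :: nat and G :: "nat set" and alpha delta :: real
    and B :: "nat \<Rightarrow> nat" and eta :: "nat \<Rightarrow> real"
    and M :: "'w measure"
    and xi :: "nat \<Rightarrow> nat \<Rightarrow> nat \<Rightarrow> 'w \<Rightarrow> 'b"
    and zeta :: "nat \<Rightarrow> nat \<Rightarrow> 'w \<Rightarrow> 'b"
    and N :: "nat \<Rightarrow> 'w \<Rightarrow> nat"
    and mun :: "nat \<Rightarrow> nat \<Rightarrow> 'w \<Rightarrow> 'a"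
    and mu :: "nat \<Rightarrow> 'w \<Rightarrow> 'a"
    and x :: "nat \<Rightarrow> nat \<Rightarrow> 'w \<Rightarrow> 'a"
    and X :: "nat \<Rightarrow> 'w \<Rightarrow> 'a"
  assumes D_prob: "prob_space D"
    and f_deriv: "\<And>y. (f has_derivative (\<lambda>h. gf y \<bullet> h)) (at y)"
    and gf_lip: "\<And>y z. norm (gf y - gf z) \<le> L * norm (y - z)"
    and g_var: "\<And>y \<xi>. \<xi> \<in> space D \<Longrightarrow> norm (g y \<xi> - gf y) \<le> V"
    and g_meas: "(\<lambda>(y, \<xi>). g y \<xi>) \<in> borel_measurable (borel \<Otimes>\<^sub>M D)"
    and xstar_min: "\<And>y. f xstar \<le> f y"
    and K_pos: "0 < K"
    and G_sub: "G \<subseteq> {..<K}"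
    and G_card: "real (card G) \<ge> (1 - alpha) * real K"
    and alpha_less: "alpha < 1 / 2"
    and delta: "0 < delta" "delta < 1"
    and B_pos: "\<And>t. 0 < B t"
    and eta_pos: "\<And>t. 0 < eta t"
    and eta_le: "\<And>t. 3 * L * real (B t) powr (2 / 3) * eta t \<le> 1"
    and M_prob: "prob_space M"
    and xi_meas: "\<And>t k i. 1 \<le> t \<Longrightarrow> k \<in> G \<Longrightarrow> i < B t \<Longrightarrow> xi t k i \<in> measurable M D"
    and zeta_meas: "\<And>t n. 1 \<le> t \<Longrightarrow> zeta t n \<in> measurable M D"
    and N_meas: "\<And>t. 1 \<le> t \<Longrightarrow> N t \<in> measurable M (count_space UNIV)"
    and N_geom: "\<And>t n. 1 \<le> t \<Longrightarrow>
                  measure M {\<omega> \<in> space M. N t \<omega> = n}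
                    = (1 / (real (B t) + 1)) * (real (B t) / (real (B t) + 1)) ^ n"
    and X0: "\<And>\<omega>. \<omega> \<in> space M \<Longrightarrow> X 0 \<omega> = x0"
    and honest: "\<And>t k \<omega>. 1 \<le> t \<Longrightarrow> k \<in> G \<Longrightarrow> \<omega> \<in> space M \<Longrightarrow>
                  mun t k \<omega> = (1 / real (B t)) *\<^sub>R (\<Sum>i<B t. g (X (t - 1) \<omega>) (xi t k i \<omega>))"
    and agg: "\<And>t \<omega>. 1 \<le> t \<Longrightarrow> \<omega> \<in> space M \<Longrightarrow>
                  agg_output (\<lambda>k. mun t k \<omega>) K alpha
                    (2 * V * sqrt (2 * ln (2 * real K / delta) / real (B t))) V (mu t \<omega>)"
    and mu_meas: "\<And>t. 1 \<le> t \<Longrightarrow> mu t \<in> borel_measurable M"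
    and x_0: "\<And>t \<omega>. 1 \<le> t \<Longrightarrow> \<omega> \<in> space M \<Longrightarrow> x t 0 \<omega> = X (t - 1) \<omega>"
    and x_step: "\<And>t n \<omega>. 1 \<le> t \<Longrightarrow> \<omega> \<in> space M \<Longrightarrow>
                  x t (Suc n) \<omega> = x t n \<omega> - eta t *\<^sub>R
                    (g (x t n \<omega>) (zeta t n \<omega>) - g (X (t - 1) \<omega>) (zeta t n \<omega>) + mu t \<omega>)"
    and X_out: "\<And>t \<omega>. 1 \<le> t \<Longrightarrow> \<omega> \<in> space M \<Longrightarrow> X t \<omega> = x t (N t \<omega>) \<omega>"
begin

sublocale M: prob_space M
  by (rule M_prob)

(* agg_radius t is the threshold T_mu of epoch t, noise_bound t the bound W_t on the perturbation
   of an inner gradient step. *)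
definition agg_radius :: "nat \<Rightarrow> real" where
  "agg_radius t = 2 * V * sqrt (2 * ln (2 * real K / delta) / real (B t))"

definition err_bound :: "nat \<Rightarrow> real" where
  "err_bound t = 3 * agg_radius t + 7 * V"

definition noise_bound :: "nat \<Rightarrow> real" where
  "noise_bound t = 2 * V + err_bound t"

definition subopt_bound :: "nat \<Rightarrow> 'w \<Rightarrow> real" where
  "subopt_bound s \<omega> = f x0 - f xstar + (\<Sum>r\<in>{1..s}. eta r * (noise_bound r)\<^sup>2 * real (N r \<omega>))"

lemma V_nonneg: "0 \<le> V"
proof -
  obtain \<xi> where "\<xi> \<in> space D"
    using prob_space.not_empty[OF D_prob] by blast
  then show ?thesis
    using g_var[of \<xi> x0] norm_ge_zero[of "g x0 \<xi> - gf x0"] by linarith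
qed

lemma L_nonneg: "0 \<le> L"
proof -
  obtain e :: 'a where "e \<in> Basis"
    using nonempty_Basis by blast
  then have "0 < norm e"
    using nonzero_Basis by auto
  moreover have "0 \<le> L * norm e"
    using order_trans[OF norm_ge_zero gf_lip[of "x0 + e" x0]] by simp
  ultimately show ?thesis
    by (simp add: zero_le_mult_iff)
qed

lemma L_eta_le: "L * eta t \<le> 1 / 3"
proof -
  have "1 \<le> real (B t) powr (2 / 3)"
    using B_pos[of t] by (intro ge_one_powr_ge_zero) auto
  then have "3 * L * eta t * 1 \<le> 3 * L * eta t * real (B t) powr (2 / 3)"
    using L_nonneg eta_pos[of t] by (intro mult_left_mono) auto
  then have "3 * L * eta t \<le> 3 * L * real (B t) powr (2 / 3) * eta t"
    by (simp add: mult_ac)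
  then show ?thesis
    using eta_le[of t] by simp
qed

lemma f_upper: "f y \<le> f z + gf z \<bullet> (y - z) + L / 2 * (norm (y - z))\<^sup>2"
  by (rule lipschitz_gradient_upper_bound[OF f_deriv gf_lip])

lemma norm_gf_sq_le: "(norm (gf y))\<^sup>2 \<le> 2 * L * (f y - f xstar)"
  using f_upper xstar_min L_nonneg by (rule norm_gradient_sq_le_suboptimality)

lemma agg_radius_nonneg: "0 \<le> agg_radius t"
proof -
  have "1 < 2 * real K / delta"
    using K_pos delta by (simp add: field_simps)
  then show ?thesis
    unfolding agg_radius_def using V_nonneg by simp
qed

lemma honest_close:
  assumes "1 \<le> t" "k \<in> G" "\<omega> \<in> space M"
  shows "norm (mun t k \<omega> - gf (X (t - 1) \<omega>)) \<le> V"
proof -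
  have "mun t k \<omega> = avg (\<lambda>i. g (X (t - 1) \<omega>) (xi t k i \<omega>)) {..<B t}"
    using honest[OF assms] by (simp add: avg_def)
  also have "norm (\<dots> - gf (X (t - 1) \<omega>)) \<le> V"
  proof (rule norm_avg_diff_le)
    show "{..<B t} \<noteq> {}"
      using B_pos[of t] by auto
    fix i
    assume "i \<in> {..<B t}"
    then have "xi t k i \<omega> \<in> space D"
      using measurable_space[OF xi_meas assms(3)] assms(1,2) by simp
    then show "norm (g (X (t - 1) \<omega>) (xi t k i \<omega>) - gf (X (t - 1) \<omega>)) \<le> V"
      by (rule g_var)
  qed simp
  finally show ?thesis .
qed

lemma mu_error_le:
  assumes "1 \<le> t" "\<omega> \<in> space M"
  shows "norm (mu t \<omega> - gf (X (t - 1) \<omega>)) \<le> err_bound t"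
proof -
  have "0 < (1 / 2 - alpha) * real K"
    using alpha_less K_pos by simp
  then have "real K < 2 * real (card G)"
    using G_card by (simp add: algebra_simps)
  then have "K < 2 * card G"
    by linarith
  then show ?thesis
    using agg[OF assms] agg_radius_nonneg[of t] honest_close[OF assms(1) _ assms(2)]
    unfolding err_bound_def agg_radius_def by (intro agg_output_close[OF _ _ V_nonneg G_sub])
qed

lemma g_comp_measurable:
  assumes "a \<in> borel_measurable M" "b \<in> measurable M D"
  shows "(\<lambda>\<omega>. g (a \<omega>) (b \<omega>)) \<in> borel_measurable M"
  using measurable_compose[OF measurable_Pair[OF assms] g_meas] by simp

lemma x_measurable:
  assumes t: "1 \<le> t" and "X (t - 1) \<in> borel_measurable M"
  shows "x t n \<in> borel_measurable M"
proof (induction n)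
  case 0
  then show ?case
    using assms(2) measurable_cong[of M "x t 0" "X (t - 1)"] x_0[OF t] by simp
next
  case (Suc n)
  have "(\<lambda>\<omega>. x t n \<omega> - eta t *\<^sub>R (g (x t n \<omega>) (zeta t n \<omega>) - g (X (t - 1) \<omega>) (zeta t n \<omega>) + mu t \<omega>))
          \<in> borel_measurable M"
    using Suc g_comp_measurable[OF Suc zeta_meas[OF t]] g_comp_measurable[OF assms(2) zeta_meas[OF t]]
      mu_meas[OF t]
    by (intro borel_measurable_diff borel_measurable_add borel_measurable_scaleR borel_measurable_const) auto
  then show ?case
    using measurable_cong[of M "x t (Suc n)"] x_step[OF t] by simp
qed

lemma X_measurable [measurable]: "X t \<in> borel_measurable M"
proof (induction t)
  case 0
  then show ?case
    using measurable_cong[of M "X 0" "\<lambda>_. x0"] X0 by simp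
next
  case (Suc t)
  have "(\<lambda>\<omega>. x (Suc t) (N (Suc t) \<omega>) \<omega>) \<in> borel_measurable M"
    by (rule measurable_compose_countable[OF _ N_meas]) (use x_measurable Suc in simp_all)
  then show ?case
    using measurable_cong[of M "X (Suc t)"] X_out[of "Suc t"] by simp
qed

lemma f_measurable [measurable]: "f \<in> borel_measurable borel"
  by (intro borel_measurable_continuous_onI has_derivative_continuous_on)
    (rule has_derivative_at_withinI[OF f_deriv])

lemma gf_measurable [measurable]: "gf \<in> borel_measurable borel"
proof (intro borel_measurable_continuous_onI lipschitz_on_continuous_on)
  show "L-lipschitz_on UNIV gf"
    using gf_lip by (intro lipschitz_onI) (auto simp: dist_norm L_nonneg)
qed

lemma N_real_measurable:
  assumes "1 \<le> t"
  shows "(\<lambda>\<omega>. real (N t \<omega>)) \<in> borel_measurable M"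
  by (rule measurable_compose[OF N_meas[OF assms]]) simp

lemma inner_loop_perturbed_gradient:
  assumes t: "1 \<le> t" and \<omega>: "\<omega> \<in> space M"
  obtains w where "\<And>n. x t (Suc n) \<omega> = x t n \<omega> - eta t *\<^sub>R (gf (x t n \<omega>) + w n)"
    and "\<And>n. norm (w n) \<le> noise_bound t"
proof
  let ?x0 = "X (t - 1) \<omega>"
  define w where "w n = (g (x t n \<omega>) (zeta t n \<omega>) - gf (x t n \<omega>))
      - (g ?x0 (zeta t n \<omega>) - gf ?x0) + (mu t \<omega> - gf ?x0)" for n
  show "x t (Suc n) \<omega> = x t n \<omega> - eta t *\<^sub>R (gf (x t n \<omega>) + w n)" for n
    using x_step[OF t \<omega>, of n] by (simp add: w_def algebra_simps)
  show "norm (w n) \<le> noise_bound t" for n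
  proof -
    have "zeta t n \<omega> \<in> space D"
      using measurable_space[OF zeta_meas[OF t] \<omega>] .
    then have "norm (g (x t n \<omega>) (zeta t n \<omega>) - gf (x t n \<omega>)) \<le> V"
      and "norm (g ?x0 (zeta t n \<omega>) - gf ?x0) \<le> V"
      by (simp_all add: g_var)
    moreover have "norm (w n) \<le> norm (g (x t n \<omega>) (zeta t n \<omega>) - gf (x t n \<omega>))
        + norm (g ?x0 (zeta t n \<omega>) - gf ?x0) + norm (mu t \<omega> - gf ?x0)"
      unfolding w_def by (rule order_trans[OF norm_triangle_ineq add_right_mono[OF norm_triangle_ineq4]])
    ultimately show ?thesis
      using mu_error_le[OF t \<omega>] by (simp add: noise_bound_def)
  qed
qed

lemma epoch_value_le:
  assumes "1 \<le> t" "\<omega> \<in> space M"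
  shows "f (X t \<omega>) \<le> f (X (t - 1) \<omega>) + real (N t \<omega>) * eta t * (noise_bound t)\<^sup>2"
proof -
  obtain w where step: "\<And>n. x t (Suc n) \<omega> = x t n \<omega> - eta t *\<^sub>R (gf (x t n \<omega>) + w n)"
    and w_le: "\<And>n. norm (w n) \<le> noise_bound t"
    using inner_loop_perturbed_gradient[OF assms] by blast
  have "f (x t (N t \<omega>) \<omega>) \<le> f (x t 0 \<omega>) + real (N t \<omega>) * eta t * (noise_bound t)\<^sup>2"
    using f_upper eta_pos L_eta_le step w_le by (rule perturbed_gradient_descent_value)
  then show ?thesis
    using X_out[OF assms] x_0[OF assms] by simp
qed

lemma epoch_displacement_sq_le:
  assumes "1 \<le> t" "\<omega> \<in> space M"
  shows "(norm (X t \<omega> - X (t - 1) \<omega>))\<^sup>2 \<le> 2 * (real (N t \<omega>))\<^sup>2 * (eta t)\<^sup>2 *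
           (2 * L * (f (X (t - 1) \<omega>) - f xstar + real (N t \<omega>) * eta t * (noise_bound t)\<^sup>2) + (noise_bound t)\<^sup>2)"
proof -
  obtain w where step: "\<And>n. x t (Suc n) \<omega> = x t n \<omega> - eta t *\<^sub>R (gf (x t n \<omega>) + w n)"
    and w_le: "\<And>n. norm (w n) \<le> noise_bound t"
    using inner_loop_perturbed_gradient[OF assms] by blast
  have "(norm (x t (N t \<omega>) \<omega> - x t 0 \<omega>))\<^sup>2 \<le> 2 * (real (N t \<omega>))\<^sup>2 * (eta t)\<^sup>2 *
           (2 * L * (f (x t 0 \<omega>) - f xstar + real (N t \<omega>) * eta t * (noise_bound t)\<^sup>2) + (noise_bound t)\<^sup>2)"
    using f_upper xstar_min L_nonneg eta_pos L_eta_le step w_le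
    by (rule perturbed_gradient_descent_displacement_sq)
  then show ?thesis
    using X_out[OF assms] x_0[OF assms] by simp
qed

lemma suboptimality_le_subopt_bound:
  assumes "\<omega> \<in> space M"
  shows "f (X s \<omega>) - f xstar \<le> subopt_bound s \<omega>"
proof (induction s)
  case 0
  then show ?case
    using X0[OF assms] by (simp add: subopt_bound_def)
next
  case (Suc s)
  then show ?case
    using epoch_value_le[of "Suc s" \<omega>] assms by (simp add: subopt_bound_def mult_ac)
qed

lemma integrable_N_power:
  assumes "1 \<le> t"
  shows "integrable M (\<lambda>\<omega>. real (N t \<omega>) ^ k)"
  using M_prob N_meas[OF assms] N_geom[OF assms] by (rule integrable_power_geometric) auto

lemma integrable_N_sq_mult:
  assumes "1 \<le> t" "1 \<le> r"
  shows "integrable M (\<lambda>\<omega>. (real (N t \<omega>))\<^sup>2 * real (N r \<omega>))"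
proof (rule integrable_abs_le)
  show "integrable M (\<lambda>\<omega>. real (N t \<omega>) ^ 3 + real (N r \<omega>) ^ 3)"
    using integrable_N_power[OF assms(1)] integrable_N_power[OF assms(2)] by simp
  show "(\<lambda>\<omega>. (real (N t \<omega>))\<^sup>2 * real (N r \<omega>)) \<in> borel_measurable M"
    using N_real_measurable[OF assms(1)] N_real_measurable[OF assms(2)] by simp
qed (simp add: sq_mult_le_cube_add_cube)

lemma integrable_subopt_bound: "integrable M (subopt_bound s)"
  unfolding subopt_bound_def using integrable_N_power[where k = 1]
  by (intro Bochner_Integration.integrable_add integrable_sum integrable_mult_right) auto

lemma integrable_suboptimality: "integrable M (\<lambda>\<omega>. f (X t \<omega>) - f xstar)"
  using integrable_subopt_bound
proof (rule integrable_abs_le)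
  fix \<omega>
  assume "\<omega> \<in> space M"
  then show "\<bar>f (X t \<omega>) - f xstar\<bar> \<le> subopt_bound t \<omega>"
    using suboptimality_le_subopt_bound[of \<omega> t] xstar_min[of "X t \<omega>"] by simp
qed measurable

lemma integrable_norm_gf_sq: "integrable M (\<lambda>\<omega>. (norm (gf (X t \<omega>)))\<^sup>2)"
proof (rule integrable_abs_le)
  show "integrable M (\<lambda>\<omega>. 2 * L * (f (X t \<omega>) - f xstar))"
    using integrable_suboptimality by simp
qed (auto simp: norm_gf_sq_le)

lemma integrable_displacement_sq:
  assumes t: "1 \<le> t"
  shows "integrable M (\<lambda>\<omega>. (norm (X t \<omega> - X (t - 1) \<omega>))\<^sup>2)"
proof (rule integrable_abs_le)
  let ?n = "\<lambda>\<omega>. real (N t \<omega>)" and ?W = "noise_bound t"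
  \<comment> \<open>the bound of epoch_displacement_sq_le with subopt_bound (t - 1) inserted, multiplied out\<close>
  define bound where "bound \<omega> = 2 * (eta t)\<^sup>2 * (?W\<^sup>2 + 2 * L * (f x0 - f xstar)) * (?n \<omega>)\<^sup>2
      + 4 * L * (eta t)\<^sup>2 * (\<Sum>r\<in>{1..t - 1}. eta r * (noise_bound r)\<^sup>2 * ((?n \<omega>)\<^sup>2 * real (N r \<omega>)))
      + 4 * L * (eta t) ^ 3 * ?W\<^sup>2 * ?n \<omega> ^ 3" for \<omega>
  show "integrable M bound"
    unfolding bound_def using integrable_N_power[OF t] integrable_N_sq_mult[OF t]
    by (intro Bochner_Integration.integrable_add integrable_sum integrable_mult_right) auto
  fix \<omega>
  assume \<omega>: "\<omega> \<in> space M"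
  have "(norm (X t \<omega> - X (t - 1) \<omega>))\<^sup>2 \<le> 2 * (?n \<omega>)\<^sup>2 * (eta t)\<^sup>2 *
           (2 * L * (f (X (t - 1) \<omega>) - f xstar + ?n \<omega> * eta t * ?W\<^sup>2) + ?W\<^sup>2)"
    by (rule epoch_displacement_sq_le[OF t \<omega>])
  also have "\<dots> \<le> 2 * (?n \<omega>)\<^sup>2 * (eta t)\<^sup>2 *
           (2 * L * (subopt_bound (t - 1) \<omega> + ?n \<omega> * eta t * ?W\<^sup>2) + ?W\<^sup>2)"
    using suboptimality_le_subopt_bound[OF \<omega>, of "t - 1"] L_nonneg
    by (intro mult_left_mono add_right_mono) auto
  also have "\<dots> = bound \<omega>"
    by (simp add: bound_def subopt_bound_def sum_distrib_left algebra_simps power2_eq_square power3_eq_cube)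
  finally show "\<bar>(norm (X t \<omega> - X (t - 1) \<omega>))\<^sup>2\<bar> \<le> bound \<omega>"
    by simp
qed measurable

lemma integrable_error_inner:
  assumes t: "1 \<le> t" and v: "integrable M (\<lambda>\<omega>. (norm (v \<omega>))\<^sup>2)" "v \<in> borel_measurable M"
  shows "integrable M (\<lambda>\<omega>. \<bar>(mu t \<omega> - gf (X (t - 1) \<omega>)) \<bullet> v \<omega>\<bar>)"
proof (rule integrable_abs_le)
  show "integrable M (\<lambda>\<omega>. err_bound t * (1 + (norm (v \<omega>))\<^sup>2))"
    using v(1) by simp
  show "(\<lambda>\<omega>. \<bar>(mu t \<omega> - gf (X (t - 1) \<omega>)) \<bullet> v \<omega>\<bar>) \<in> borel_measurable M"
    using mu_meas[OF t] v(2) by measurable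
  fix \<omega>
  assume "\<omega> \<in> space M"
  then show "\<bar>\<bar>(mu t \<omega> - gf (X (t - 1) \<omega>)) \<bullet> v \<omega>\<bar>\<bar> \<le> err_bound t * (1 + (norm (v \<omega>))\<^sup>2)"
    using abs_inner_le_one_plus_sq[OF mu_error_le[OF t]] by simp
qed

end

theorem lemma8:
  fixes f0 :: "'a::euclidean_space \<Rightarrow> 'b \<Rightarrow> real"   \<comment> \<open>f(x;\<xi>)\<close>
    and g :: "'a \<Rightarrow> 'b \<Rightarrow> 'a"                         \<comment> \<open>\<nabla>f(x;\<xi>)\<close>
    and f :: "'a \<Rightarrow> real" and gf :: "'a \<Rightarrow> 'a"          \<comment> \<open>f and \<nabla>f\<close>
    and D :: "'b measure" and L V :: real and xstar x0 :: 'a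
    and K :: nat and G :: "nat set" and alpha delta :: real
    and B :: "nat \<Rightarrow> nat" and eta :: "nat \<Rightarrow> real"
    and M :: "'w measure"
    and xi :: "nat \<Rightarrow> nat \<Rightarrow> nat \<Rightarrow> 'w \<Rightarrow> 'b"        \<comment> \<open>xi t k i = \<xi>_{t,i}^{(k)}\<close>
    and zeta :: "nat \<Rightarrow> nat \<Rightarrow> 'w \<Rightarrow> 'b"             \<comment> \<open>zeta t n = \<xi>_n^t\<close>
    and N :: "nat \<Rightarrow> 'w \<Rightarrow> nat"
    and mun :: "nat \<Rightarrow> nat \<Rightarrow> 'w \<Rightarrow> 'a"              \<comment> \<open>mun t k = \<mu>_t^{(k)}\<close>
    and mu :: "nat \<Rightarrow> 'w \<Rightarrow> 'a"                     \<comment> \<open>\<mu>_t\<close>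
    and x :: "nat \<Rightarrow> nat \<Rightarrow> 'w \<Rightarrow> 'a"                \<comment> \<open>x t n = x_n^t\<close>
    and X :: "nat \<Rightarrow> 'w \<Rightarrow> 'a"                      \<comment> \<open>X t = x~_t\<close>
  assumes D_prob: "prob_space D"
    and f0_int: "\<And>y. integrable D (f0 y)"
    and f_def: "\<And>y. f y = (\<integral>\<xi>. f0 y \<xi> \<partial>D)"
    and f0_deriv: "\<And>y \<xi>. \<xi> \<in> space D \<Longrightarrow> ((\<lambda>z. f0 z \<xi>) has_derivative (\<lambda>h. g y \<xi> \<bullet> h)) (at y)"
    and g_lip: "\<And>y z \<xi>. \<xi> \<in> space D \<Longrightarrow> norm (g y \<xi> - g z \<xi>) \<le> L * norm (y - z)"
    and f_deriv: "\<And>y. (f has_derivative (\<lambda>h. gf y \<bullet> h)) (at y)"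
    and gf_lip: "\<And>y z. norm (gf y - gf z) \<le> L * norm (y - z)"
    and g_var: "\<And>y \<xi>. \<xi> \<in> space D \<Longrightarrow> norm (g y \<xi> - gf y) \<le> V"
    and g_meas: "(\<lambda>(y, \<xi>). g y \<xi>) \<in> borel_measurable (borel \<Otimes>\<^sub>M D)"
    and xstar_min: "\<And>y. f xstar \<le> f y"
    and K_pos: "0 < K"
    and G_sub: "G \<subseteq> {..<K}"
    and G_card: "real (card G) \<ge> (1 - alpha) * real K"
    and alpha: "0 \<le> alpha" "alpha < 1 / 2"
    and delta: "0 < delta" "delta < 1"
    and B_pos: "\<And>t. 0 < B t"
    and eta_pos: "\<And>t. 0 < eta t"
    and eta_le: "\<And>t. 3 * L * real (B t) powr (2 / 3) * eta t \<le> 1"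
    and M_prob: "prob_space M"
    and xi_rv: "\<And>t k i. 1 \<le> t \<Longrightarrow> k \<in> G \<Longrightarrow> i < B t \<Longrightarrow>
                  xi t k i \<in> measurable M D \<and> distr M D (xi t k i) = D"
    and zeta_rv: "\<And>t n. 1 \<le> t \<Longrightarrow> zeta t n \<in> measurable M D \<and> distr M D (zeta t n) = D"
    and N_rv: "\<And>t. 1 \<le> t \<Longrightarrow> N t \<in> measurable M (count_space UNIV)"
    and N_geom: "\<And>t n. 1 \<le> t \<Longrightarrow>
                  measure M {\<omega> \<in> space M. N t \<omega> = n}
                    = (1 / (real (B t) + 1)) * (real (B t) / (real (B t) + 1)) ^ n"
    and indep: "prob_space.indep_sets M
                  (\<lambda>j. case j of
                      Samp t k i \<Rightarrow> gen_events M (xi t k i) D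
                    | Inner t n \<Rightarrow> gen_events M (zeta t n) D
                    | Geo t \<Rightarrow> gen_events M (N t) (count_space UNIV))
                  ({Samp t k i | t k i. 1 \<le> t \<and> k \<in> G \<and> i < B t}
                   \<union> {Inner t n | t n. 1 \<le> t} \<union> {Geo t | t. 1 \<le> t})"
    and X0: "\<And>\<omega>. \<omega> \<in> space M \<Longrightarrow> X 0 \<omega> = x0"
    and honest: "\<And>t k \<omega>. 1 \<le> t \<Longrightarrow> k \<in> G \<Longrightarrow> \<omega> \<in> space M \<Longrightarrow>
                  mun t k \<omega> = (1 / real (B t)) *\<^sub>R (\<Sum>i<B t. g (X (t - 1) \<omega>) (xi t k i \<omega>))"
    and byz_meas: "\<And>t k. 1 \<le> t \<Longrightarrow> k < K \<Longrightarrow> k \<notin> G \<Longrightarrow> mun t k \<in> borel_measurable M"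
    and agg: "\<And>t \<omega>. 1 \<le> t \<Longrightarrow> \<omega> \<in> space M \<Longrightarrow>
                  agg_output (\<lambda>k. mun t k \<omega>) K alpha
                    (2 * V * sqrt (2 * ln (2 * real K / delta) / real (B t))) V (mu t \<omega>)"
    and mu_meas: "\<And>t. 1 \<le> t \<Longrightarrow> mu t \<in> borel_measurable M"
    and x_0: "\<And>t \<omega>. 1 \<le> t \<Longrightarrow> \<omega> \<in> space M \<Longrightarrow> x t 0 \<omega> = X (t - 1) \<omega>"
    and x_step: "\<And>t n \<omega>. 1 \<le> t \<Longrightarrow> \<omega> \<in> space M \<Longrightarrow>
                  x t (Suc n) \<omega> = x t n \<omega> - eta t *\<^sub>R
                    (g (x t n \<omega>) (zeta t n \<omega>) - g (X (t - 1) \<omega>) (zeta t n \<omega>) + mu t \<omega>)"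
    and X_out: "\<And>t \<omega>. 1 \<le> t \<Longrightarrow> \<omega> \<in> space M \<Longrightarrow> X t \<omega> = x t (N t \<omega>) \<omega>"
  shows "\<forall>t\<ge>1.
           integrable M (\<lambda>\<omega>. (norm (X t \<omega> - X (t - 1) \<omega>))\<^sup>2)
         \<and> integrable M (\<lambda>\<omega>. f (X t \<omega>) - f xstar)
         \<and> integrable M (\<lambda>\<omega>. (norm (gf (X t \<omega>)))\<^sup>2)
         \<and> integrable M (\<lambda>\<omega>. \<bar>(mu t \<omega> - gf (X (t - 1) \<omega>)) \<bullet> (X t \<omega> - X (t - 1) \<omega>)\<bar>)
         \<and> integrable M (\<lambda>\<omega>. \<bar>(mu t \<omega> - gf (X (t - 1) \<omega>)) \<bullet> gf (X t \<omega>)\<bar>)"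
proof -
  interpret byzantine_svrg g f gf D L V xstar x0 K G alpha delta B eta M xi zeta N mun mu x X
    by (rule byzantine_svrg.intro) (rule assms conjunct1[OF xi_rv] conjunct1[OF zeta_rv] | assumption)+
  show ?thesis
  proof (intro allI impI conjI)
    fix t :: nat
    assume t: "1 \<le> t"
    show "integrable M (\<lambda>\<omega>. (norm (X t \<omega> - X (t - 1) \<omega>))\<^sup>2)"
      using t by (rule integrable_displacement_sq)
    show "integrable M (\<lambda>\<omega>. f (X t \<omega>) - f xstar)"
      by (rule integrable_suboptimality)
    show "integrable M (\<lambda>\<omega>. (norm (gf (X t \<omega>)))\<^sup>2)"
      by (rule integrable_norm_gf_sq)
    show "integrable M (\<lambda>\<omega>. \<bar>(mu t \<omega> - gf (X (t - 1) \<omega>)) \<bullet> (X t \<omega> - X (t - 1) \<omega>)\<bar>)"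
      using t integrable_displacement_sq[OF t] by (rule integrable_error_inner) measurable
    show "integrable M (\<lambda>\<omega>. \<bar>(mu t \<omega> - gf (X (t - 1) \<omega>)) \<bullet> gf (X t \<omega>)\<bar>)"
      using t integrable_norm_gf_sq by (rule integrable_error_inner) measurable
  qed
qed

end
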